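(* Let $m,n$ be positive integers and let $r_1,\dots,r_k$ and $s_1,\dots,s_k$ be positive integers with $\sum_{i=1}^k r_i=m$ and $\sum_{i=1}^k s_i=n$. Put $a_0=0$ and $a_p=\sum_{i=1}^p(nr_i-ms_i)$ for $p\in[k-1]$. Let $\Lambda=(a'_1,\dots,a'_n|b'_1,\dots,b'_m)\in\mathbb Z^{n|m}$ where $(b'_1,\dots,b'_m)$ is the concatenation, for $i=1,\dots,k$, of the blocks $(a_{i-1},a_{i-1}+n,a_{i-1}+2n,\dots,a_{i-1}+(r_i-1)n)$, and $(a'_1,\dots,a'_n)$ is the concatenation, for $i=1,\dots,k-1$, of the blocks $(a_i+(s_i-1)m,\dots,a_i+m,a_i)$, followed by the block $((s_k-1)m,\dots,m,0)$. Then $\Lambda$ lies in the orbit of $\Lambda_0=(m(n-1),\dots,m,0\,|\,0,n,\dots,n(m-1))$ under the Weyl groupoid action on $\mathbb Z^{n|m}$.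
   Context: Elements of $\mathbb Z^{n|m}$ are written $\Lambda=(a_1,\dots,a_n|b_1,\dots,b_m)$, identified with $\sum_ia_i\epsilon_i-\sum_jb_j\delta_j$. The Weyl groupoid action (Sergeev–Veselov action with parameter $-n/m$) is generated by: the group $S_n\times S_m$ permuting $a_1,\dots,a_n$ among themselves and $b_1,\dots,b_m$ among themselves; and, for each $\alpha=\epsilon_i-\delta_j$, the bijection $\tau_\alpha:\Pi_\alpha\to\Pi_{-\alpha}$, $\Lambda\mapsto\Lambda+n\epsilon_i-m\delta_j$ (adding $n$ to $a_i$ and $m$ to $b_j$) and its inverse $\tau_{-\alpha}$, where $\Pi_\alpha=\{a_i=b_j\}$ and $\Pi_{-\alpha}=\{a_i-b_j=n-m\}$. The orbit of $\Lambda_0$ is the set of elements reachable from $\Lambda_0$ by finite sequences of such permutations and maps $\tau_{\pm\alpha}$ (each applied on its domain). *)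

theory Defs
  imports Main "HOL-Library.Multiset"
begin

text \<open>Elements of Z^{n|m} are pairs (a, b) of integer lists with length a = n and
length b = m, standing for (a_1,...,a_n | b_1,...,b_m).  Indices are 0-based.\<close>

type_synonym superweight = "int list \<times> int list"

text \<open>One generating step of the Weyl groupoid action (parameter -n/m) on Z^{n|m}:
a permutation in S_n x S_m, or tau_alpha (alpha = eps_i - delta_j) applied on its
domain a_i = b_j, or its inverse tau_{-alpha} applied on its domain a_i - b_j = n - m.\<close>

inductive weyl_step :: "nat \<Rightarrow> nat \<Rightarrow> superweight \<Rightarrow> superweight \<Rightarrow> bool"
  for n m :: nat where
  perm: "length a = n \<Longrightarrow> length b = m \<Longrightarrow> mset a' = mset a \<Longrightarrow> mset b' = mset b
         \<Longrightarrow> weyl_step n m (a, b) (a', b')"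
| tau_pos: "length a = n \<Longrightarrow> length b = m \<Longrightarrow> i < n \<Longrightarrow> j < m \<Longrightarrow> a ! i = b ! j
         \<Longrightarrow> weyl_step n m (a, b) (a[i := a ! i + int n], b[j := b ! j + int m])"
| tau_neg: "length a = n \<Longrightarrow> length b = m \<Longrightarrow> i < n \<Longrightarrow> j < m
         \<Longrightarrow> a ! i - b ! j = int n - int m
         \<Longrightarrow> weyl_step n m (a, b) (a[i := a ! i - int n], b[j := b ! j - int m])"

definition weyl_orbit :: "nat \<Rightarrow> nat \<Rightarrow> superweight \<Rightarrow> superweight set" where
  "weyl_orbit n m \<Lambda>0 = {\<Lambda>. (weyl_step n m)\<^sup>*\<^sup>* \<Lambda>0 \<Lambda>}"

definition Lambda0 :: "nat \<Rightarrow> nat \<Rightarrow> superweight" where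
  "Lambda0 n m = (map (\<lambda>t. int m * int t) (rev [0..<n]), map (\<lambda>t. int n * int t) [0..<m])"

text \<open>a_p = sum_{i=1}^p (n r_i - m s_i); with 0-based lists rs, ss this is the sum over i < p.\<close>
definition apos :: "nat \<Rightarrow> nat \<Rightarrow> nat list \<Rightarrow> nat list \<Rightarrow> nat \<Rightarrow> int" where
  "apos n m rs ss p = (\<Sum>i<p. int n * int (rs ! i) - int m * int (ss ! i))"

definition Lambda_rs :: "nat \<Rightarrow> nat \<Rightarrow> nat list \<Rightarrow> nat list \<Rightarrow> superweight" where
  "Lambda_rs n m rs ss =
    (let k = length rs in
     (concat (map (\<lambda>i. map (\<lambda>t. apos n m rs ss (i + 1) + int t * int m) (rev [0..<ss ! i]))
                  [0..<k - 1])
        @ map (\<lambda>t. int t * int m) (rev [0..<ss ! (k - 1)]),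
      concat (map (\<lambda>i. map (\<lambda>t. apos n m rs ss i + int t * int n) [0..<rs ! i]) [0..<k])))"

end

theory Submission
  imports Defs
begin

(* The blocks are put in place one at a time.  Before block i, the b-entries from position
   F' = r_1 + ... + r_(i-1) on form the progression j n - m P with P = s_1 + ... + s_(i-1),
   and the a-entries from position P on are still those of Lambda_0.  Each of the next s_i
   entries a_p is swept by tau_(-alpha) against b_(m-1), b_(m-2), ..., b_F with
   F = r_1 + ... + r_i: the progressions of the a- and b-entries have steps m and n, which is
   exactly what keeps a_p - b_j = n - m along the sweep.  The sweeps lower these a_p by
   n (m - F) and every b_j with j >= F by m s_i, which puts block i in place and leaves the
   b-tail a progression of the same shape. *)

lemma list_update_extend_map_suffix:
  assumes "F < length b"
  shows "(take (Suc F) b @ map f (drop (Suc F) b))[F := f (b ! F)] = take F b @ map f (drop F b)"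
  using assms by (simp add: take_Suc_conv_app_nth Cons_nth_drop_Suc[symmetric] list_update_append)

lemma list_update_extend_map_segment:
  assumes "P + s < length a"
  shows "(take P a @ map f (take s (drop P a)) @ drop (P + s) a)[P + s := f (a ! (P + s))]
           = take P a @ map f (take (Suc s) (drop P a)) @ drop (P + Suc s) a"
proof -
  have "take (Suc s) (drop P a) = take s (drop P a) @ [a ! (P + s)]"
    using assms by (simp add: take_Suc_conv_app_nth)
  moreover have "drop (P + s) a = a ! (P + s) # drop (P + Suc s) a"
    using assms by (simp add: Cons_nth_drop_Suc)
  moreover have "length (take P a @ map f (take s (drop P a))) = P + s"
    using assms by simp
  ultimately show ?thesis
    by (simp add: list_update_append)
qed

lemma weyl_steps_sweep_row:
  assumes "length a = n" "length b = m" "P < n" "F \<le> m"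
    and "\<forall>j. F \<le> j \<and> j < m \<longrightarrow> b ! j = a ! P + int m - int n * int (m - j)"
  shows "(weyl_step n m)\<^sup>*\<^sup>* (a, b)
           (a[P := a ! P - int n * int (m - F)], take F b @ map (\<lambda>y. y - int m) (drop F b))"
  using assms(4,5)
proof (induction "m - F" arbitrary: F)
  case 0
  then show ?case using assms(2) by simp
next
  case (Suc d)
  let ?a = "a[P := a ! P - int n * int (m - Suc F)]"
  let ?b = "take (Suc F) b @ map (\<lambda>y. y - int m) (drop (Suc F) b)"
  have "(weyl_step n m)\<^sup>*\<^sup>* (a, b) (?a, ?b)"
    using Suc by (intro Suc.hyps) auto
  moreover have "weyl_step n m (?a, ?b) (?a[P := ?a ! P - int n], ?b[F := ?b ! F - int m])"
    using Suc assms by (intro weyl_step.tau_neg) (auto simp: nth_append algebra_simps)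
  moreover have "?a[P := ?a ! P - int n] = a[P := a ! P - int n * int (m - F)]"
    using Suc assms by (simp add: algebra_simps)
  moreover have "?b[F := ?b ! F - int m] = take F b @ map (\<lambda>y. y - int m) (drop F b)"
    using Suc assms list_update_extend_map_suffix[of F b "\<lambda>y. y - int m"] by (simp add: nth_append)
  ultimately show ?case by (metis rtranclp.rtrancl_into_rtrancl)
qed

lemma weyl_steps_sweep_rows:
  assumes "length a = n" "length b = m" "P + s \<le> n" "F \<le> m"
    and "\<forall>i<s. a ! (P + i) = c - int m * int i"
    and "\<forall>j. F \<le> j \<and> j < m \<longrightarrow> b ! j = c + int m - int n * int (m - j)"
  shows "(weyl_step n m)\<^sup>*\<^sup>* (a, b)
           (take P a @ map (\<lambda>x. x - int n * int (m - F)) (take s (drop P a)) @ drop (P + s) a,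
            take F b @ map (\<lambda>y. y - int m * int s) (drop F b))"
  using assms(3,5)
proof (induction s)
  case 0
  then show ?case by simp
next
  case (Suc s)
  let ?a = "take P a @ map (\<lambda>x. x - int n * int (m - F)) (take s (drop P a)) @ drop (P + s) a"
  let ?b = "take F b @ map (\<lambda>y. y - int m * int s) (drop F b)"
  have first_rows: "(weyl_step n m)\<^sup>*\<^sup>* (a, b) (?a, ?b)"
    using Suc by (intro Suc.IH) auto
  have a_last: "?a ! (P + s) = a ! (P + s)"
    using Suc assms by (simp add: nth_append)
  have last_row: "(weyl_step n m)\<^sup>*\<^sup>* (?a, ?b)
      (?a[P + s := ?a ! (P + s) - int n * int (m - F)], take F ?b @ map (\<lambda>y. y - int m) (drop F ?b))"
  proof (rule weyl_steps_sweep_row)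
    show "length ?a = n" "length ?b = m" using Suc assms by auto
    have "?b ! j = b ! j - int m * int s" if "F \<le> j" "j < m" for j
      using that assms by (simp add: nth_append)
    then show "\<forall>j. F \<le> j \<and> j < m \<longrightarrow> ?b ! j = ?a ! (P + s) + int m - int n * int (m - j)"
      using a_last Suc.prems(2) assms(6) by auto
  qed (use Suc assms in auto)
  have "?a[P + s := ?a ! (P + s) - int n * int (m - F)]
      = take P a @ map (\<lambda>x. x - int n * int (m - F)) (take (Suc s) (drop P a)) @ drop (P + Suc s) a"
    unfolding a_last using Suc.prems assms(1) by (intro list_update_extend_map_segment) simp
  moreover have "take F ?b @ map (\<lambda>y. y - int m) (drop F ?b)
      = take F b @ map (\<lambda>y. y - int m * int (Suc s)) (drop F b)"
    using assms by (simp add: algebra_simps)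
  ultimately show ?case
    using rtranclp_trans[OF first_rows last_row] by simp
qed

definition a_block :: "nat \<Rightarrow> nat \<Rightarrow> nat list \<Rightarrow> nat list \<Rightarrow> nat \<Rightarrow> int list" where
  "a_block n m rs ss i = map (\<lambda>t. apos n m rs ss (i + 1) + int t * int m) (rev [0..<ss ! i])"

definition b_block :: "nat \<Rightarrow> nat \<Rightarrow> nat list \<Rightarrow> nat list \<Rightarrow> nat \<Rightarrow> int list" where
  "b_block n m rs ss i = map (\<lambda>t. apos n m rs ss i + int t * int n) [0..<rs ! i]"

definition Lambda_partial :: "nat \<Rightarrow> nat \<Rightarrow> nat list \<Rightarrow> nat list \<Rightarrow> nat \<Rightarrow> superweight" where
  "Lambda_partial n m rs ss i =
    (concat (map (a_block n m rs ss) [0..<i])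
       @ map (\<lambda>p. (int n - 1 - int p) * int m) [sum_list (take i ss)..<n],
     concat (map (b_block n m rs ss) [0..<i])
       @ map (\<lambda>j. int j * int n - int m * int (sum_list (take i ss))) [sum_list (take i rs)..<m])"

lemma sum_list_take_le: "sum_list (take i xs) \<le> sum_list (xs :: nat list)"
  by (metis append_take_drop_id le_add1 sum_list_append)

lemma apos_eq_prefix_sums:
  assumes "length ss = length rs" "i \<le> length rs"
  shows "apos n m rs ss i = int n * int (sum_list (take i rs)) - int m * int (sum_list (take i ss))"
  using assms(2)
proof (induction i)
  case 0
  then show ?case by (simp add: apos_def)
next
  case (Suc i)
  then show ?case
    using assms(1) by (simp add: apos_def take_Suc_conv_app_nth algebra_simps)
qed

lemma length_concat_a_blocks:
  "i \<le> length ss \<Longrightarrow> length (concat (map (a_block n m rs ss) [0..<i])) = sum_list (take i ss)"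
  by (induction i) (auto simp: a_block_def take_Suc_conv_app_nth)

lemma length_concat_b_blocks:
  "i \<le> length rs \<Longrightarrow> length (concat (map (b_block n m rs ss) [0..<i])) = sum_list (take i rs)"
  by (induction i) (auto simp: b_block_def take_Suc_conv_app_nth)

lemma a_block_eq_upt:
  assumes "length ss = length rs" "sum_list rs = m" "i < length rs"
  shows "a_block n m rs ss i =
    map (\<lambda>p. (int n - 1 - int p) * int m - int n * int (m - sum_list (take (Suc i) rs)))
      [sum_list (take i ss)..<sum_list (take (Suc i) ss)]"
proof (rule nth_equalityI)
  have "apos n m rs ss (i + 1) = int n * int (sum_list (take (Suc i) rs))
      - int m * int (sum_list (take (Suc i) ss))"
    using assms by (simp add: apos_eq_prefix_sums)
  moreover have "sum_list (take (Suc i) rs) \<le> m"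
    using assms(2) sum_list_take_le by blast
  ultimately show "a_block n m rs ss i ! t =
      map (\<lambda>p. (int n - 1 - int p) * int m - int n * int (m - sum_list (take (Suc i) rs)))
        [sum_list (take i ss)..<sum_list (take (Suc i) ss)] ! t"
    if "t < length (a_block n m rs ss i)" for t
    using that assms by (simp add: a_block_def take_Suc_conv_app_nth rev_nth algebra_simps)
qed (use assms in \<open>simp add: a_block_def take_Suc_conv_app_nth\<close>)

lemma b_block_eq_upt:
  assumes "length ss = length rs" "i < length rs"
  shows "b_block n m rs ss i =
    map (\<lambda>j. int j * int n - int m * int (sum_list (take i ss)))
      [sum_list (take i rs)..<sum_list (take (Suc i) rs)]"
proof (rule nth_equalityI)
  have "apos n m rs ss i = int n * int (sum_list (take i rs)) - int m * int (sum_list (take i ss))"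
    using assms by (simp add: apos_eq_prefix_sums)
  then show "b_block n m rs ss i ! t =
      map (\<lambda>j. int j * int n - int m * int (sum_list (take i ss)))
        [sum_list (take i rs)..<sum_list (take (Suc i) rs)] ! t"
    if "t < length (b_block n m rs ss i)" for t
    using that assms by (simp add: b_block_def take_Suc_conv_app_nth algebra_simps)
qed (use assms in \<open>simp add: b_block_def take_Suc_conv_app_nth\<close>)

lemma weyl_steps_Lambda_partial_Suc:
  assumes "length ss = length rs" "sum_list rs = m" "sum_list ss = n" "i < length rs"
  shows "(weyl_step n m)\<^sup>*\<^sup>* (Lambda_partial n m rs ss i) (Lambda_partial n m rs ss (Suc i))"
proof -
  define P where "P = sum_list (take i ss)"
  define s where "s = ss ! i"
  define F0 where "F0 = sum_list (take i rs)"
  define F where "F = F0 + rs ! i"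
  define g where "g = (\<lambda>p::nat. (int n - 1 - int p) * int m)"
  define h where "h = (\<lambda>j::nat. int j * int n - int m * int P)"
  define A0 where "A0 = concat (map (a_block n m rs ss) [0..<i])"
  define B0 where "B0 = concat (map (b_block n m rs ss) [0..<i])"
  define A where "A = A0 @ map g [P..<n]"
  define B where "B = B0 @ map h [F0..<m]"
  have prefix_sums: "sum_list (take (Suc i) ss) = P + s" "sum_list (take (Suc i) rs) = F"
    using assms by (simp_all add: P_def s_def F_def F0_def take_Suc_conv_app_nth)
  have "P + s \<le> n" "F \<le> m"
    using sum_list_take_le[of "Suc i" ss] sum_list_take_le[of "Suc i" rs] prefix_sums assms by auto
  have len: "length A0 = P" "length B0 = F0"
    using assms by (simp_all add: A0_def B0_def P_def F0_def length_concat_a_blocks length_concat_b_blocks)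
  have sweep: "(weyl_step n m)\<^sup>*\<^sup>* (A, B)
     (take P A @ map (\<lambda>x. x - int n * int (m - F)) (take s (drop P A)) @ drop (P + s) A,
      take F B @ map (\<lambda>y. y - int m * int s) (drop F B))"
  proof (rule weyl_steps_sweep_rows)
    show "\<forall>t<s. A ! (P + t) = g P - int m * int t"
      using len \<open>P + s \<le> n\<close> by (auto simp: A_def nth_append g_def algebra_simps)
    show "\<forall>j. F \<le> j \<and> j < m \<longrightarrow> B ! j = g P + int m - int n * int (m - j)"
      using len F_def by (auto simp: B_def nth_append g_def h_def algebra_simps)
  qed (use len \<open>P + s \<le> n\<close> \<open>F \<le> m\<close> F_def in \<open>auto simp: A_def B_def\<close>)
  have split: "take P A = A0" "take s (drop P A) = map g [P..<P + s]" "drop (P + s) A = map g [P + s..<n]"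
    "take F B = B0 @ map h [F0..<F]" "drop F B = map h [F..<m]"
    using len \<open>P + s \<le> n\<close> \<open>F \<le> m\<close> F_def by (simp_all add: A_def B_def take_map drop_map)
  have a_block_eq: "map (\<lambda>x. x - int n * int (m - F)) (map g [P..<P + s]) = a_block n m rs ss i"
    using a_block_eq_upt[OF assms(1,2,4)] by (simp add: prefix_sums g_def P_def)
  have b_block_eq: "map h [F0..<F] = b_block n m rs ss i"
    using b_block_eq_upt[OF assms(1,4)] by (simp add: prefix_sums h_def P_def F0_def)
  have tail_eq: "map (\<lambda>y. y - int m * int s) (map h [F..<m])
      = map (\<lambda>j. int j * int n - int m * int (P + s)) [F..<m]"
    by (simp add: h_def algebra_simps)
  have "Lambda_partial n m rs ss i = (A, B)"
    by (simp add: Lambda_partial_def A_def B_def A0_def B0_def P_def F0_def g_def h_def)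
  moreover have "Lambda_partial n m rs ss (Suc i) =
      (A0 @ a_block n m rs ss i @ map g [P + s..<n],
       B0 @ b_block n m rs ss i @ map (\<lambda>j. int j * int n - int m * int (P + s)) [F..<m])"
    by (simp add: Lambda_partial_def A0_def B0_def prefix_sums g_def)
  ultimately show ?thesis
    using sweep by (simp only: split a_block_eq b_block_eq tail_eq append_assoc)
qed

lemma weyl_steps_Lambda_partial:
  assumes "length ss = length rs" "sum_list rs = m" "sum_list ss = n" "i \<le> length rs"
  shows "(weyl_step n m)\<^sup>*\<^sup>* (Lambda_partial n m rs ss 0) (Lambda_partial n m rs ss i)"
  using assms(4)
proof (induction i)
  case 0
  then show ?case by simp
next
  case (Suc i)
  then show ?case
    using weyl_steps_Lambda_partial_Suc[OF assms(1-3), of i] by (simp add: rtranclp_trans)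
qed

lemma Lambda_partial_0: "Lambda_partial n m rs ss 0 = Lambda0 n m"
  by (auto simp: Lambda_partial_def Lambda0_def rev_map[symmetric] rev_nth algebra_simps
           intro!: nth_equalityI)

lemma Lambda_partial_length:
  assumes "length ss = length rs" "sum_list rs = m" "sum_list ss = n" "rs \<noteq> []"
  shows "Lambda_partial n m rs ss (length rs) = Lambda_rs n m rs ss"
proof -
  have "apos n m rs ss (length rs) = 0"
    using assms by (simp add: apos_eq_prefix_sums)
  moreover have "[0..<length rs] = [0..<length rs - 1] @ [length rs - 1]"
    using assms(4) by (simp flip: upt_Suc_append)
  ultimately show ?thesis
    using assms
    by (simp add: Lambda_partial_def Lambda_rs_def Let_def a_block_def[abs_def] b_block_def[abs_def])
qed

theorem proposition6p2:
  fixes m n :: nat and rs ss :: "nat list"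
  assumes "0 < m" and "0 < n"
    and "length ss = length rs"
    and "\<forall>x \<in> set rs. 0 < x" and "\<forall>x \<in> set ss. 0 < x"
    and "sum_list rs = m" and "sum_list ss = n"
  shows "Lambda_rs n m rs ss \<in> weyl_orbit n m (Lambda0 n m)"
proof -
  have "rs \<noteq> []"
    using assms(1,6) by auto
  then show ?thesis
    using weyl_steps_Lambda_partial[OF assms(3,6,7) order_refl]
    by (simp add: weyl_orbit_def Lambda_partial_0 Lambda_partial_length assms(3,6,7))
qed

end
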